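(* Let $n\ge3$ and let $k\ne\mathbb{F}_2$ be a field. Let $S=k[x_{i,j}]_{1\le i<j\le 2n}$, setting $x_{j,i}:=x_{i,j}$ for $i<j$, and let $f=\sum_{M}a_M\prod_{\{i,j\}\in M}x_{i,j}$, the sum over all perfect matchings $M$ of $\{1,\dots,2n\}$, with all $a_M\in k^*$ (equivalently, $f$ is of the form $\sum_{\sigma\in S_{2n}}a_\sigma x_{\sigma(1),\sigma(2)}\cdots x_{\sigma(2n-1),\sigma(2n)}$ in which every such monomial has nonzero total coefficient). Then $f$ is not a direct sum.
   Context: A form $f$ in a polynomial ring over $k$ is a direct sum if, after an invertible linear change of the variables, it can be written as $f_1+f_2$ with $f_1,f_2$ nonzero forms in disjoint sets of the new variables. *)

theory Defs
  imports Main "HOL-Library.Poly_Mapping"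
begin

text \<open>Multivariate polynomials over a field 'a in variables of type 'v are
  represented as finitely supported maps from monomials (exponent vectors,
  of type 'v to nat) to coefficients; multiplication is convolution.\<close>

type_synonym ('v, 'a) mpoly = "('v \<Rightarrow>\<^sub>0 nat) \<Rightarrow>\<^sub>0 'a"

definition mvar :: "'v \<Rightarrow> ('v, 'a::comm_ring_1) mpoly" where
  "mvar v = Poly_Mapping.single (Poly_Mapping.single v 1) 1"

definition mconst_mono :: "'a::comm_ring_1 \<Rightarrow> ('v \<Rightarrow>\<^sub>0 nat) \<Rightarrow> ('v, 'a) mpoly" where
  "mconst_mono c m = Poly_Mapping.single m c"

definition vars :: "('v, 'a::zero) mpoly \<Rightarrow> 'v set" where
  "vars p = {v. \<exists>m\<in>Poly_Mapping.keys p. v \<in> Poly_Mapping.keys m}"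

definition mdeg :: "('v \<Rightarrow>\<^sub>0 nat) \<Rightarrow> nat" where
  "mdeg m = (\<Sum>v\<in>Poly_Mapping.keys m. Poly_Mapping.lookup m v)"

definition is_form :: "('v, 'a::zero) mpoly \<Rightarrow> bool" where
  "is_form p \<longleftrightarrow> (\<exists>d. \<forall>m\<in>Poly_Mapping.keys p. mdeg m = d)"

definition subst :: "('v \<Rightarrow> ('v, 'a::comm_ring_1) mpoly) \<Rightarrow> ('v, 'a) mpoly \<Rightarrow> ('v, 'a) mpoly" where
  "subst \<sigma> p = (\<Sum>m\<in>Poly_Mapping.keys p. mconst_mono (Poly_Mapping.lookup p m) 0 * (\<Prod>v\<in>Poly_Mapping.keys m. \<sigma> v ^ Poly_Mapping.lookup m v))"

definition lin_subst :: "'v set \<Rightarrow> ('v \<Rightarrow> 'v \<Rightarrow> 'a::comm_ring_1) \<Rightarrow> 'v \<Rightarrow> ('v, 'a) mpoly" where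
  "lin_subst V A v = (\<Sum>w\<in>V. mconst_mono (A v w) 0 * mvar w)"

definition invertible_on :: "'v set \<Rightarrow> ('v \<Rightarrow> 'v \<Rightarrow> 'a::comm_ring_1) \<Rightarrow> bool" where
  "invertible_on V A \<longleftrightarrow> (\<exists>B.
     (\<forall>u\<in>V. \<forall>w\<in>V. (\<Sum>v\<in>V. A u v * B v w) = (if u = w then 1 else 0)) \<and>
     (\<forall>u\<in>V. \<forall>w\<in>V. (\<Sum>v\<in>V. B u v * A v w) = (if u = w then 1 else 0)))"

definition direct_sum :: "'v set \<Rightarrow> ('v, 'a::field) mpoly \<Rightarrow> bool" where
  "direct_sum V f \<longleftrightarrow> (\<exists>A f1 f2 V1 V2.
     invertible_on V A \<and>
     subst (lin_subst V A) f = f1 + f2 \<and>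
     is_form f1 \<and> is_form f2 \<and> f1 \<noteq> 0 \<and> f2 \<noteq> 0 \<and>
     V1 \<subseteq> V \<and> V2 \<subseteq> V \<and> V1 \<inter> V2 = {} \<and> vars f1 \<subseteq> V1 \<and> vars f2 \<subseteq> V2)"

definition pvars :: "nat \<Rightarrow> (nat \<times> nat) set" where
  "pvars n = {(i, j). 1 \<le> i \<and> i < j \<and> j \<le> 2 * n}"

text \<open>Perfect matchings of {1..2n}, each edge {i,j} recorded as the pair (i,j) with i < j.\<close>
definition perfect_matchings :: "nat \<Rightarrow> (nat \<times> nat) set set" where
  "perfect_matchings n = {M. M \<subseteq> pvars n \<and>
     (\<forall>k\<in>{1..2*n}. \<exists>!e\<in>M. fst e = k \<or> snd e = k)}"

definition matching_monomial :: "(nat \<times> nat) set \<Rightarrow> (nat \<times> nat, 'a::comm_ring_1) mpoly" where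
  "matching_monomial M = (\<Prod>e\<in>M. mvar e)"

end

theory Submission
  imports Defs
begin

text \<open>Suppose an invertible linear substitution \<open>A\<close> turns \<open>f = \<Sum>\<^sub>M a\<^sub>M x\<^sup>M\<close> into
  \<open>f\<^sub>1 + f\<^sub>2\<close> with \<open>f\<^sub>1\<close> in the variables \<open>U\<close> and \<open>f\<^sub>2\<close> in the others. Then the mixed second
  derivatives \<open>\<partial>\<^sub>u\<partial>\<^sub>w (f \<circ> A)\<close> with \<open>u \<in> U\<close>, \<open>w \<notin> U\<close> vanish. Read off in the original
  coordinates, this says that \<open>T = A diag(1\<^sub>U) A\<inverse>\<close> satisfies \<open>T\<^sup>t H\<^sub>N = H\<^sub>N T\<close> for every
  set of edges \<open>N\<close>, where \<open>H\<^sub>N\<close> is the coefficient of \<open>x\<^sup>N\<close> in the Hessian of \<open>f\<close>, i.e.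
  \<open>(H\<^sub>N)\<^sub>g\<^sub>h = a(N \<union> {g, h})\<close>. A perfect matching is determined by all but one of its edges, so
  for \<open>2n \<ge> 6\<close> these matrices are sparse enough to force \<open>T\<close> to be scalar, whereas a
  conjugate of a proper coordinate projection is not. The argument works over every field.\<close>

subsection \<open>Substitution\<close>

abbreviation mconst :: "'a::comm_ring_1 \<Rightarrow> ('v, 'a) mpoly" where
  "mconst c \<equiv> mconst_mono c 0"

lemma mconst_mono_0 [simp]: "mconst_mono 0 m = 0"
  by (simp add: mconst_mono_def)

lemma mconst_1: "mconst 1 = 1"
  by (simp add: mconst_mono_def)

lemma mconst_add: "mconst (a + b) = mconst a + mconst b"
  by (simp add: mconst_mono_def single_add)

lemma mconst_mult: "mconst (a * b) = mconst a * mconst b"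
  by (simp add: mconst_mono_def mult_single)

lemma mconst_sum: "mconst (\<Sum>i\<in>I. f i) = (\<Sum>i\<in>I. mconst (f i))"
  by (induction I rule: infinite_finite_induct) (auto simp: mconst_add)

lemma mconst_mult_single: "mconst c * Poly_Mapping.single m d = Poly_Mapping.single m (c * d)"
  by (simp add: mconst_mono_def mult_single)

lemma sum_single_lookup: "(\<Sum>m\<in>Poly_Mapping.keys p. Poly_Mapping.single m (Poly_Mapping.lookup p m)) = p"
proof (rule poly_mapping_eqI)
  fix k
  show "Poly_Mapping.lookup (\<Sum>m\<in>Poly_Mapping.keys p. Poly_Mapping.single m (Poly_Mapping.lookup p m)) k
      = Poly_Mapping.lookup p k"
    by (simp add: lookup_sum lookup_single when_def sum.delta in_keys_iff)
qed

definition eval_monomial :: "('v \<Rightarrow> ('v, 'a::comm_ring_1) mpoly) \<Rightarrow> ('v \<Rightarrow>\<^sub>0 nat) \<Rightarrow> ('v, 'a) mpoly" where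
  "eval_monomial \<sigma> m = (\<Prod>v\<in>Poly_Mapping.keys m. \<sigma> v ^ Poly_Mapping.lookup m v)"

lemma eval_monomial_superset:
  assumes "finite K" "Poly_Mapping.keys m \<subseteq> K"
  shows "eval_monomial \<sigma> m = (\<Prod>v\<in>K. \<sigma> v ^ Poly_Mapping.lookup m v)"
  unfolding eval_monomial_def
  by (rule prod.mono_neutral_left) (use assms in \<open>auto simp: in_keys_iff\<close>)

lemma eval_monomial_0 [simp]: "eval_monomial \<sigma> 0 = 1"
  by (simp add: eval_monomial_def)

lemma eval_monomial_add: "eval_monomial \<sigma> (m + m') = eval_monomial \<sigma> m * eval_monomial \<sigma> m'"
proof -
  let ?K = "Poly_Mapping.keys m \<union> Poly_Mapping.keys m'"
  have "eval_monomial \<sigma> (m + m') = (\<Prod>v\<in>?K. \<sigma> v ^ Poly_Mapping.lookup (m + m') v)"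
    by (rule eval_monomial_superset) (auto dest: subsetD[OF keys_add])
  also have "\<dots> = (\<Prod>v\<in>?K. \<sigma> v ^ Poly_Mapping.lookup m v) * (\<Prod>v\<in>?K. \<sigma> v ^ Poly_Mapping.lookup m' v)"
    by (simp add: lookup_add power_add prod.distrib)
  finally show ?thesis
    by (simp add: eval_monomial_superset[of ?K])
qed

lemma eval_monomial_mvar: "eval_monomial mvar m = Poly_Mapping.single m 1"
proof -
  have pow: "mvar v ^ k = Poly_Mapping.single (Poly_Mapping.single v k) 1" for v and k :: nat
    by (induction k) (simp_all add: mvar_def mult_single single_add[symmetric] add.commute)
  have "eval_monomial mvar m
      = (\<Prod>v\<in>Poly_Mapping.keys m. Poly_Mapping.single (Poly_Mapping.single v (Poly_Mapping.lookup m v)) 1)"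
    by (simp add: eval_monomial_def pow)
  also have "\<dots> = Poly_Mapping.single (\<Sum>v\<in>Poly_Mapping.keys m. Poly_Mapping.single v (Poly_Mapping.lookup m v)) 1"
    by (induction rule: infinite_finite_induct) (simp_all add: mult_single)
  finally show ?thesis
    by (simp add: sum_single_lookup)
qed

lemma subst_eq_sum_superset:
  assumes "finite K" "Poly_Mapping.keys p \<subseteq> K"
  shows "subst \<sigma> p = (\<Sum>m\<in>K. mconst (Poly_Mapping.lookup p m) * eval_monomial \<sigma> m)"
  unfolding subst_def eval_monomial_def[symmetric]
  by (rule sum.mono_neutral_left) (use assms in \<open>auto simp: in_keys_iff\<close>)

lemma subst_0 [simp]: "subst \<sigma> 0 = 0"
  by (simp add: subst_def)

lemma subst_add: "subst \<sigma> (p + q) = subst \<sigma> p + subst \<sigma> q"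
proof -
  let ?K = "Poly_Mapping.keys p \<union> Poly_Mapping.keys q"
  have "subst \<sigma> (p + q) = (\<Sum>m\<in>?K. mconst (Poly_Mapping.lookup (p + q) m) * eval_monomial \<sigma> m)"
    by (rule subst_eq_sum_superset) (auto dest: subsetD[OF keys_add])
  then show ?thesis
    by (simp add: subst_eq_sum_superset[of ?K] lookup_add mconst_add distrib_right sum.distrib)
qed

lemma subst_sum: "subst \<sigma> (\<Sum>i\<in>I. f i) = (\<Sum>i\<in>I. subst \<sigma> (f i))"
  by (induction I rule: infinite_finite_induct) (auto simp: subst_add)

lemma subst_single: "subst \<sigma> (Poly_Mapping.single m c) = mconst c * eval_monomial \<sigma> m"
  by (subst subst_eq_sum_superset[of "{m}"]) auto

lemma subst_mult: "subst \<sigma> (p * q) = subst \<sigma> p * subst \<sigma> q"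
proof -
  have "p * q = (\<Sum>m\<in>Poly_Mapping.keys p. \<Sum>m'\<in>Poly_Mapping.keys q.
      Poly_Mapping.single (m + m') (Poly_Mapping.lookup p m * Poly_Mapping.lookup q m'))"
    by (subst (1 2) sum_single_lookup[symmetric]) (simp add: sum_product mult_single)
  then have "subst \<sigma> (p * q) = (\<Sum>m\<in>Poly_Mapping.keys p. \<Sum>m'\<in>Poly_Mapping.keys q.
      (mconst (Poly_Mapping.lookup p m) * eval_monomial \<sigma> m) * (mconst (Poly_Mapping.lookup q m') * eval_monomial \<sigma> m'))"
    by (simp add: subst_sum subst_single eval_monomial_add mconst_mult mult_ac)
  then show ?thesis
    by (simp add: subst_def eval_monomial_def sum_product)
qed

lemma subst_mconst [simp]: "subst \<sigma> (mconst c) = mconst c"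
  by (simp add: mconst_mono_def subst_single)

lemma subst_1 [simp]: "subst \<sigma> 1 = 1"
  using subst_mconst[of \<sigma> 1] by (simp add: mconst_1)

lemma subst_mvar [simp]: "subst \<sigma> (mvar v) = \<sigma> v"
  by (simp add: mvar_def subst_single eval_monomial_def mconst_1)

lemma subst_prod: "subst \<sigma> (\<Prod>i\<in>I. f i) = (\<Prod>i\<in>I. subst \<sigma> (f i))"
  by (induction I rule: infinite_finite_induct) (auto simp: subst_mult)

lemma subst_power: "subst \<sigma> (p ^ k) = subst \<sigma> p ^ k"
  by (induction k) (simp_all add: subst_mult)

lemma subst_subst: "subst \<tau> (subst \<sigma> p) = subst (\<lambda>v. subst \<tau> (\<sigma> v)) p"
  unfolding subst_def[of \<sigma>] subst_def[of "\<lambda>v. subst \<tau> (\<sigma> v)"]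
  by (simp add: subst_sum subst_mult subst_prod subst_power)

lemma subst_cong:
  assumes "\<And>v. v \<in> vars p \<Longrightarrow> \<sigma> v = \<tau> v"
  shows "subst \<sigma> p = subst \<tau> p"
proof -
  have "\<sigma> v = \<tau> v" if "m \<in> Poly_Mapping.keys p" "v \<in> Poly_Mapping.keys m" for m v
    using assms that by (auto simp: vars_def)
  then show ?thesis
    unfolding subst_def by (intro sum.cong refl arg_cong2[where f = "(*)"] prod.cong) simp_all
qed

lemma subst_mvar_id: "subst mvar p = p"
  by (simp add: subst_def eval_monomial_def[symmetric] eval_monomial_mvar mconst_mult_single sum_single_lookup)

lemma subst_zero_eq_mconst: "subst (\<lambda>_. 0) p = mconst (Poly_Mapping.lookup p 0)"
proof -
  have eval_zero: "eval_monomial (\<lambda>_. 0) m = (if m = 0 then 1 else 0)" for m :: "'v \<Rightarrow>\<^sub>0 nat"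
  proof (cases "m = 0")
    case False
    then obtain v where "v \<in> Poly_Mapping.keys m"
      by (metis all_not_in_conv keys_eq_empty)
    then have "eval_monomial (\<lambda>_. 0) m = 0"
      unfolding eval_monomial_def by (intro prod_zero bexI[of _ v]) (auto simp: in_keys_iff power_0_left)
    with False show ?thesis
      by simp
  qed simp
  have "subst (\<lambda>_. 0) p = (\<Sum>m\<in>Poly_Mapping.keys p. if m = 0 then mconst (Poly_Mapping.lookup p m) else 0)"
    unfolding subst_def eval_monomial_def[symmetric] eval_zero by (intro sum.cong) auto
  then show ?thesis
    by (simp add: sum.delta in_keys_iff)
qed

subsection \<open>Partial derivatives\<close>

definition partial_deriv :: "'v \<Rightarrow> ('v, 'a::comm_ring_1) mpoly \<Rightarrow> ('v, 'a) mpoly" where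
  "partial_deriv v p = (\<Sum>m\<in>Poly_Mapping.keys p. Poly_Mapping.single (m - Poly_Mapping.single v 1)
      (Poly_Mapping.lookup p m * of_nat (Poly_Mapping.lookup m v)))"

lemma partial_deriv_eq_sum_superset:
  assumes "finite K" "Poly_Mapping.keys p \<subseteq> K"
  shows "partial_deriv v p = (\<Sum>m\<in>K. Poly_Mapping.single (m - Poly_Mapping.single v 1)
      (Poly_Mapping.lookup p m * of_nat (Poly_Mapping.lookup m v)))"
  unfolding partial_deriv_def
  by (rule sum.mono_neutral_left) (use assms in \<open>auto simp: in_keys_iff\<close>)

lemma partial_deriv_0 [simp]: "partial_deriv v 0 = 0"
  by (simp add: partial_deriv_def)

lemma partial_deriv_add: "partial_deriv v (p + q) = partial_deriv v p + partial_deriv v q"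
proof -
  let ?K = "Poly_Mapping.keys p \<union> Poly_Mapping.keys q"
  have "partial_deriv v (p + q) = (\<Sum>m\<in>?K. Poly_Mapping.single (m - Poly_Mapping.single v 1)
      (Poly_Mapping.lookup (p + q) m * of_nat (Poly_Mapping.lookup m v)))"
    by (rule partial_deriv_eq_sum_superset) (auto dest: subsetD[OF keys_add])
  then show ?thesis
    by (simp add: partial_deriv_eq_sum_superset[of ?K] lookup_add distrib_right single_add sum.distrib)
qed

lemma partial_deriv_sum: "partial_deriv v (\<Sum>i\<in>I. f i) = (\<Sum>i\<in>I. partial_deriv v (f i))"
  by (induction I rule: infinite_finite_induct) (auto simp: partial_deriv_add)

lemma partial_deriv_single: "partial_deriv v (Poly_Mapping.single m c) =
    Poly_Mapping.single (m - Poly_Mapping.single v 1) (c * of_nat (Poly_Mapping.lookup m v))"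
  by (subst partial_deriv_eq_sum_superset[of "{m}"]) auto

lemma partial_deriv_single_mult:
  "partial_deriv v (Poly_Mapping.single m a * Poly_Mapping.single m' b) =
     partial_deriv v (Poly_Mapping.single m a) * Poly_Mapping.single m' b
   + Poly_Mapping.single m a * partial_deriv v (Poly_Mapping.single m' b)"
proof -
  let ?d = "Poly_Mapping.single v (1::nat)"
  have shift: "m - ?d + m' = m + m' - ?d" "m' + (m - ?d) = m' + m - ?d"
    if "Poly_Mapping.lookup m v \<noteq> 0" for m m' :: "'a \<Rightarrow>\<^sub>0 nat"
    using that by (auto intro!: poly_mapping_eqI simp: lookup_add lookup_minus lookup_single when_def)
  have left: "Poly_Mapping.single (m - ?d + m') (a * of_nat (Poly_Mapping.lookup m v) * b)
      = Poly_Mapping.single (m + m' - ?d) (a * of_nat (Poly_Mapping.lookup m v) * b)"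
    using shift(1)[of m m'] by (cases "Poly_Mapping.lookup m v = 0") auto
  have right: "Poly_Mapping.single (m + (m' - ?d)) (a * (b * of_nat (Poly_Mapping.lookup m' v)))
      = Poly_Mapping.single (m + m' - ?d) (a * (b * of_nat (Poly_Mapping.lookup m' v)))"
    using shift(2)[of m' m] by (cases "Poly_Mapping.lookup m' v = 0") auto
  show ?thesis
    unfolding mult_single partial_deriv_single lookup_add left right single_add[symmetric]
    by (simp add: algebra_simps)
qed

lemma partial_deriv_mult: "partial_deriv v (p * q) = partial_deriv v p * q + p * partial_deriv v q"
proof -
  let ?s = "\<lambda>r m. Poly_Mapping.single m (Poly_Mapping.lookup r m)"
  have expand: "partial_deriv v r = (\<Sum>m\<in>Poly_Mapping.keys r. partial_deriv v (?s r m))" for r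
    by (subst (1) sum_single_lookup[symmetric]) (simp only: partial_deriv_sum)
  have "p * q = (\<Sum>m\<in>Poly_Mapping.keys p. \<Sum>m'\<in>Poly_Mapping.keys q. ?s p m * ?s q m')"
    by (subst (1 2) sum_single_lookup[symmetric]) (simp add: sum_product)
  then have "partial_deriv v (p * q) = (\<Sum>m\<in>Poly_Mapping.keys p. \<Sum>m'\<in>Poly_Mapping.keys q.
      partial_deriv v (?s p m) * ?s q m' + ?s p m * partial_deriv v (?s q m'))"
    by (simp add: partial_deriv_sum partial_deriv_single_mult)
  also have "\<dots> = (\<Sum>m\<in>Poly_Mapping.keys p. partial_deriv v (?s p m)) * (\<Sum>m'\<in>Poly_Mapping.keys q. ?s q m')
      + (\<Sum>m\<in>Poly_Mapping.keys p. ?s p m) * (\<Sum>m'\<in>Poly_Mapping.keys q. partial_deriv v (?s q m'))"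
    by (simp add: sum_product sum.distrib)
  also have "\<dots> = partial_deriv v p * q + p * partial_deriv v q"
    by (simp only: expand[symmetric] sum_single_lookup)
  finally show ?thesis .
qed

lemma partial_deriv_mconst [simp]: "partial_deriv v (mconst c) = 0"
  by (simp add: mconst_mono_def partial_deriv_single)

lemma partial_deriv_1 [simp]: "partial_deriv v 1 = 0"
  using partial_deriv_mconst[of v 1] by (simp add: mconst_1)

lemma partial_deriv_mconst_mult: "partial_deriv v (mconst c * p) = mconst c * partial_deriv v p"
  by (simp add: partial_deriv_mult)

lemma partial_deriv_mvar: "partial_deriv v (mvar w) = (if w = v then 1 else 0)"
  by (simp add: mvar_def partial_deriv_single lookup_single)

lemma partial_deriv_prod:
  assumes "finite S"
  shows "partial_deriv v (\<Prod>e\<in>S. f e) = (\<Sum>e\<in>S. partial_deriv v (f e) * (\<Prod>e'\<in>S - {e}. f e'))"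
  using assms
proof (induction S rule: finite_induct)
  case (insert x S)
  have "(\<Prod>e'\<in>insert x S - {e}. f e') = f x * (\<Prod>e'\<in>S - {e}. f e')" if "e \<in> S" for e
  proof -
    have "insert x S - {e} = insert x (S - {e})" "x \<notin> S - {e}"
      using insert.hyps that by auto
    then show ?thesis
      using insert.hyps by simp
  qed
  moreover have "insert x S - {x} = S"
    using insert.hyps by auto
  ultimately show ?case
    using insert by (simp add: partial_deriv_mult sum_distrib_left mult_ac cong: sum.cong)
qed simp

lemma vars_partial_deriv: "vars (partial_deriv v p) \<subseteq> vars p"
proof
  fix x assume "x \<in> vars (partial_deriv v p)"
  then obtain m where m: "m \<in> Poly_Mapping.keys (partial_deriv v p)" "x \<in> Poly_Mapping.keys m"
    by (auto simp: vars_def)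
  from m(1) obtain m0 where "m0 \<in> Poly_Mapping.keys p" "m = m0 - Poly_Mapping.single v 1"
    using keys_sum[of _ "Poly_Mapping.keys p"] unfolding partial_deriv_def by (fastforce split: if_splits)
  moreover from this m(2) have "Poly_Mapping.lookup m0 x \<noteq> 0"
    by (auto simp: in_keys_iff lookup_minus)
  ultimately show "x \<in> vars p"
    by (auto simp: vars_def in_keys_iff)
qed

lemma partial_deriv_eq_0_if_not_in_vars:
  assumes "v \<notin> vars p"
  shows "partial_deriv v p = 0"
  unfolding partial_deriv_def
proof (intro sum.neutral ballI)
  fix m assume "m \<in> Poly_Mapping.keys p"
  with assms have "Poly_Mapping.lookup m v = 0"
    by (auto simp: vars_def in_keys_iff)
  then show "Poly_Mapping.single (m - Poly_Mapping.single v 1)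
      (Poly_Mapping.lookup p m * of_nat (Poly_Mapping.lookup m v)) = 0"
    by simp
qed

lemma subst_lin_subst_lin_subst:
  assumes "finite V" "e \<in> V"
    and AB: "\<forall>u\<in>V. \<forall>w\<in>V. (\<Sum>v\<in>V. A u v * B v w) = (if u = w then 1 else 0)"
  shows "subst (lin_subst V B) (lin_subst V A e) = mvar e"
proof -
  have "subst (lin_subst V B) (lin_subst V A e) =
      (\<Sum>w\<in>V. \<Sum>z\<in>V. mconst (A e w * B w z) * mvar z)"
    by (simp add: lin_subst_def subst_sum subst_mult sum_distrib_left mconst_mult mult.assoc)
  also have "\<dots> = (\<Sum>z\<in>V. mconst (\<Sum>w\<in>V. A e w * B w z) * mvar z)"
    by (subst sum.swap) (simp add: mconst_sum sum_distrib_right)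
  also have "\<dots> = (\<Sum>z\<in>V. if z = e then mvar z else 0)"
    using AB assms(2) by (intro sum.cong) (auto simp: mconst_1)
  finally show ?thesis
    using assms(1,2) by simp
qed

lemma subst_lin_subst_inverse:
  assumes "finite V" "vars p \<subseteq> V"
    and AB: "\<forall>u\<in>V. \<forall>w\<in>V. (\<Sum>v\<in>V. A u v * B v w) = (if u = w then 1 else 0)"
  shows "subst (lin_subst V B) (subst (lin_subst V A) p) = p"
proof -
  have "subst (lin_subst V B) (subst (lin_subst V A) p) = subst mvar p"
    unfolding subst_subst using assms by (intro subst_cong) (auto intro: subst_lin_subst_lin_subst)
  then show ?thesis
    by (simp add: subst_mvar_id)
qed

lemma lookup_subst_lin_subst_0:
  "Poly_Mapping.lookup (subst (lin_subst V A) p) 0 = Poly_Mapping.lookup p 0"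
proof -
  have "subst (\<lambda>_. 0) (lin_subst V A v) = 0" for v
    by (simp add: lin_subst_def subst_sum subst_mult)
  then have "subst (\<lambda>_. 0) (subst (lin_subst V A) p) = subst (\<lambda>_. 0) p"
    by (simp add: subst_subst)
  then show ?thesis
    by (metis subst_zero_eq_mconst mconst_mono_def lookup_single_eq)
qed

lemma partial_deriv_lin_subst:
  assumes "finite V" "w \<in> V"
  shows "partial_deriv w (lin_subst V A e) = mconst (A e w)"
  using assms
  by (simp add: lin_subst_def partial_deriv_sum partial_deriv_mconst_mult partial_deriv_mvar if_distrib
      cong: if_cong)

lemma mdeg_eq_0_iff: "mdeg m = 0 \<longleftrightarrow> m = 0"
  by (auto simp: mdeg_def in_keys_iff simp flip: keys_eq_empty)

lemma vars_summand_nonempty: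
  fixes g p q :: "('v, 'a::comm_ring_1) mpoly"
  assumes "g \<noteq> 0" "Poly_Mapping.lookup g 0 = 0" "g = p + q" "p \<noteq> 0" "is_form q"
  shows "vars p \<noteq> {}"
proof
  assume "vars p = {}"
  then have keys_p: "Poly_Mapping.keys p \<subseteq> {0}"
    by (auto simp: vars_def simp flip: keys_eq_empty)
  then have "Poly_Mapping.keys p = {0}"
    using \<open>p \<noteq> 0\<close> by (metis keys_eq_empty subset_singletonD)
  then have "0 \<in> Poly_Mapping.keys q"
    using assms(2,3) by (auto simp: lookup_add in_keys_iff add_eq_0_iff)
  moreover obtain m0 where "Poly_Mapping.lookup g m0 \<noteq> 0"
    using \<open>g \<noteq> 0\<close> by (metis poly_mapping_eqI lookup_zero)
  then have "m0 \<noteq> 0" "m0 \<in> Poly_Mapping.keys q"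
    using assms(2,3) keys_p by (auto simp: lookup_add in_keys_iff)
  moreover obtain d where "\<forall>m\<in>Poly_Mapping.keys q. mdeg m = d"
    using \<open>is_form q\<close> unfolding is_form_def by blast
  ultimately have "mdeg m0 = mdeg (0 :: 'v \<Rightarrow>\<^sub>0 nat)"
    by simp
  then show False
    using \<open>m0 \<noteq> 0\<close> by (metis mdeg_eq_0_iff)
qed

lemma direct_sum_imp_block_hessian:
  fixes f :: "('v, 'k::field) mpoly"
  assumes "direct_sum V f" and V: "finite V" and "vars f \<subseteq> V" "f \<noteq> 0" "Poly_Mapping.lookup f 0 = 0"
  obtains A B U where
    "\<forall>u\<in>V. \<forall>w\<in>V. (\<Sum>v\<in>V. A u v * B v w) = (if u = w then 1 else 0)"
    "\<forall>u\<in>V. \<forall>w\<in>V. (\<Sum>v\<in>V. B u v * A v w) = (if u = w then 1 else 0)"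
    "U \<subseteq> V" "U \<noteq> {}" "U \<noteq> V"
    "\<forall>u\<in>U. \<forall>w\<in>V - U. partial_deriv u (partial_deriv w (subst (lin_subst V A) f)) = 0"
proof -
  obtain A f1 f2 V1 V2 where A: "invertible_on V A" and g: "subst (lin_subst V A) f = f1 + f2"
    and forms: "is_form f1" "is_form f2" "f1 \<noteq> 0" "f2 \<noteq> 0"
    and split: "V1 \<subseteq> V" "V2 \<subseteq> V" "V1 \<inter> V2 = {}" "vars f1 \<subseteq> V1" "vars f2 \<subseteq> V2"
    using \<open>direct_sum V f\<close> unfolding direct_sum_def by blast
  from A obtain B where
    AB: "\<forall>u\<in>V. \<forall>w\<in>V. (\<Sum>v\<in>V. A u v * B v w) = (if u = w then 1 else 0)" and
    BA: "\<forall>u\<in>V. \<forall>w\<in>V. (\<Sum>v\<in>V. B u v * A v w) = (if u = w then 1 else 0)"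
    unfolding invertible_on_def by blast
  have "subst (lin_subst V A) f \<noteq> 0"
    using subst_lin_subst_inverse[OF V \<open>vars f \<subseteq> V\<close> AB] \<open>f \<noteq> 0\<close> by auto
  moreover have "Poly_Mapping.lookup (subst (lin_subst V A) f) 0 = 0"
    by (simp add: lookup_subst_lin_subst_0 \<open>Poly_Mapping.lookup f 0 = 0\<close>)
  ultimately have "vars f1 \<noteq> {}" "vars f2 \<noteq> {}"
    using vars_summand_nonempty[OF _ _ g forms(3,2)] vars_summand_nonempty[OF _ _ _ forms(4,1)] g
    by (auto simp: add.commute)
  then have "V1 \<noteq> {}" "\<not> V \<subseteq> V1"
    using split by blast+
  moreover have "partial_deriv u (partial_deriv w (subst (lin_subst V A) f)) = 0"
    if "u \<in> V1" "w \<in> V - V1" for u w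
  proof -
    have "partial_deriv w f1 = 0"
      using that split by (intro partial_deriv_eq_0_if_not_in_vars) auto
    moreover have "u \<notin> vars (partial_deriv w f2)"
      using vars_partial_deriv[of w f2] that split by auto
    ultimately show ?thesis
      by (simp add: g partial_deriv_add partial_deriv_eq_0_if_not_in_vars)
  qed
  ultimately show ?thesis
    using that[OF AB BA \<open>V1 \<subseteq> V\<close>] by blast
qed

subsection \<open>Multilinear polynomials and their Hessians\<close>

definition sqfree_monomial :: "'v set \<Rightarrow> ('v \<Rightarrow>\<^sub>0 nat)" where
  "sqfree_monomial S = (\<Sum>e\<in>S. Poly_Mapping.single e 1)"

lemma lookup_sqfree_monomial:
  "finite S \<Longrightarrow> Poly_Mapping.lookup (sqfree_monomial S) e = (if e \<in> S then 1 else 0)"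
  by (simp add: sqfree_monomial_def lookup_sum lookup_single when_def)

lemma sqfree_monomial_inject:
  "finite S \<Longrightarrow> finite N \<Longrightarrow> sqfree_monomial S = sqfree_monomial N \<longleftrightarrow> S = N"
  by (metis lookup_sqfree_monomial one_neq_zero subsetI subset_antisym)

lemma prod_mvar_eq_single: "finite S \<Longrightarrow> (\<Prod>e\<in>S. mvar e) = Poly_Mapping.single (sqfree_monomial S) 1"
  by (induction S rule: finite_induct) (simp_all add: sqfree_monomial_def mvar_def mult_single)

definition multilinear_poly :: "('v set \<Rightarrow> 'a) \<Rightarrow> 'v set set \<Rightarrow> ('v, 'a::comm_ring_1) mpoly" where
  "multilinear_poly a P = (\<Sum>M\<in>P. mconst (a M) * (\<Prod>e\<in>M. mvar e))"

lemma subst_multilinear_poly: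
  "subst \<sigma> (multilinear_poly a P) = (\<Sum>M\<in>P. mconst (a M) * (\<Prod>e\<in>M. \<sigma> e))"
  by (simp add: multilinear_poly_def subst_sum subst_mult subst_prod)

lemma lookup_multilinear_poly:
  assumes "finite P" "\<forall>M\<in>P. finite M" "finite N"
  shows "Poly_Mapping.lookup (multilinear_poly a P) (sqfree_monomial N) = (if N \<in> P then a N else 0)"
proof -
  have "Poly_Mapping.lookup (multilinear_poly a P) (sqfree_monomial N) = (\<Sum>M\<in>P. if M = N then a M else 0)"
    unfolding multilinear_poly_def lookup_sum using assms
    by (intro sum.cong) (auto simp: prod_mvar_eq_single mconst_mult_single lookup_single sqfree_monomial_inject)
  then show ?thesis
    using assms(1) by simp
qed

lemma vars_multilinear_poly:
  assumes "\<forall>M\<in>P. finite M"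
  shows "vars (multilinear_poly a P) \<subseteq> \<Union>P"
proof
  fix x assume "x \<in> vars (multilinear_poly a P)"
  then obtain m where m: "m \<in> Poly_Mapping.keys (multilinear_poly a P)" "x \<in> Poly_Mapping.keys m"
    by (auto simp: vars_def)
  from m(1) have "m \<in> (\<Union>M\<in>P. Poly_Mapping.keys (mconst (a M) * (\<Prod>e\<in>M. mvar e)))"
    unfolding multilinear_poly_def by (rule subsetD[OF keys_sum])
  then obtain M where M: "M \<in> P" "m \<in> Poly_Mapping.keys (mconst (a M) * (\<Prod>e\<in>M. mvar e))"
    by blast
  then have "m = sqfree_monomial M"
    using assms by (simp add: prod_mvar_eq_single mconst_mult_single split: if_splits)
  with M(1) m(2) assms show "x \<in> \<Union>P"
    by (auto simp: in_keys_iff lookup_sqfree_monomial split: if_splits)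
qed

lemma multilinear_poly_nonzero:
  assumes "finite P" "\<forall>M\<in>P. finite M" "M \<in> P" "a M \<noteq> 0"
  shows "multilinear_poly a P \<noteq> 0"
  using lookup_multilinear_poly[OF assms(1,2), of M a] assms(2-4) by auto

lemma lookup_multilinear_poly_0:
  assumes "finite P" "\<forall>M\<in>P. finite M" "{} \<notin> P"
  shows "Poly_Mapping.lookup (multilinear_poly a P) 0 = 0"
  using lookup_multilinear_poly[OF assms(1,2), of "{}" a] assms(3) by (simp add: sqfree_monomial_def)

lemma subst_lin_subst_hessian_multilinear_poly:
  assumes V: "finite V" and PV: "\<forall>M\<in>P. M \<subseteq> V" and uV: "u \<in> V" and wV: "w \<in> V"
    and AB: "\<forall>u\<in>V. \<forall>w\<in>V. (\<Sum>v\<in>V. A u v * B v w) = (if u = w then 1 else 0)"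
  shows "subst (lin_subst V B) (partial_deriv u (partial_deriv w (subst (lin_subst V A) (multilinear_poly a P))))
       = (\<Sum>M\<in>P. \<Sum>e\<in>M. \<Sum>e'\<in>M - {e}.
            Poly_Mapping.single (sqfree_monomial (M - {e} - {e'})) (a M * A e w * A e' u))"
proof -
  let ?\<sigma> = "lin_subst V A" and ?\<tau> = "lin_subst V B"
  have fin: "finite M" if "M \<in> P" for M
    using that PV V by (meson finite_subset)
  have second_deriv: "partial_deriv u (partial_deriv w (\<Prod>e\<in>M. ?\<sigma> e)) = (\<Sum>e\<in>M. mconst (A e w) *
      (\<Sum>e'\<in>M - {e}. mconst (A e' u) * (\<Prod>e''\<in>M - {e} - {e'}. ?\<sigma> e'')))" if "M \<in> P" for M
    using fin[OF that]
    by (simp add: partial_deriv_prod partial_deriv_lin_subst partial_deriv_sum partial_deriv_mconst_mult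
        V uV wV mult.commute)
  have undo_prod: "subst ?\<tau> (\<Prod>e''\<in>M - {e} - {e'}. ?\<sigma> e'')
      = Poly_Mapping.single (sqfree_monomial (M - {e} - {e'})) 1" if "M \<in> P" for M e e'
  proof -
    have MV: "M - {e} - {e'} \<subseteq> V"
      using that PV by blast
    then have "subst ?\<tau> (\<Prod>e''\<in>M - {e} - {e'}. ?\<sigma> e'') = (\<Prod>e''\<in>M - {e} - {e'}. mvar e'')"
      unfolding subst_prod by (intro prod.cong) (auto intro!: subst_lin_subst_lin_subst V AB)
    then show ?thesis
      using prod_mvar_eq_single[OF finite_subset[OF MV V]] by simp
  qed
  have "subst ?\<tau> (partial_deriv u (partial_deriv w (subst ?\<sigma> (multilinear_poly a P))))
     = (\<Sum>M\<in>P. mconst (a M) * (\<Sum>e\<in>M. mconst (A e w) *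
        (\<Sum>e'\<in>M - {e}. mconst (A e' u) * Poly_Mapping.single (sqfree_monomial (M - {e} - {e'})) 1)))"
    by (auto simp: subst_multilinear_poly partial_deriv_sum partial_deriv_mconst_mult second_deriv
        subst_sum subst_mult undo_prod intro!: sum.cong)
  also have "\<dots> = (\<Sum>M\<in>P. \<Sum>e\<in>M. \<Sum>e'\<in>M - {e}.
            Poly_Mapping.single (sqfree_monomial (M - {e} - {e'})) (a M * A e w * A e' u))"
    by (simp add: sum_distrib_left mconst_mult_single mult.assoc)
  finally show ?thesis .
qed

lemma sum_distinct_pairs_extend:
  fixes G :: "'v \<Rightarrow> 'v \<Rightarrow> 'a::comm_monoid_add"
  assumes "finite V" "M \<subseteq> V"
  shows "(\<Sum>e\<in>M. \<Sum>e'\<in>M - {e}. G e e')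
      = (\<Sum>e\<in>V. \<Sum>e'\<in>V. if e \<in> M \<and> e' \<in> M \<and> e' \<noteq> e then G e e' else 0)"
proof -
  have "(\<Sum>e\<in>M. \<Sum>e'\<in>M - {e}. G e e') = (\<Sum>e\<in>V \<inter> M. \<Sum>e'\<in>V \<inter> (M - {e}). G e e')"
    using assms(2) by (intro sum.cong) auto
  also have "\<dots> = (\<Sum>e\<in>V. if e \<in> M then (\<Sum>e'\<in>V. if e' \<in> M \<and> e' \<noteq> e then G e e' else 0) else 0)"
    using assms(1) by (simp add: sum.inter_restrict)
  also have "\<dots> = (\<Sum>e\<in>V. \<Sum>e'\<in>V. if e \<in> M \<and> e' \<in> M \<and> e' \<noteq> e then G e e' else 0)"
    by (intro sum.cong) auto
  finally show ?thesis .
qed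

lemma sum_remove_pair_reindex:
  fixes F :: "'v set \<Rightarrow> 'v \<Rightarrow> 'v \<Rightarrow> 'a::comm_monoid_add"
  assumes "finite P" "finite V" "\<forall>M\<in>P. M \<subseteq> V"
  shows "(\<Sum>M\<in>P. \<Sum>e\<in>M. \<Sum>e'\<in>M - {e}. if M - {e} - {e'} = N then F M e e' else 0)
       = (\<Sum>e\<in>V. \<Sum>e'\<in>V. if e \<noteq> e' \<and> e \<notin> N \<and> e' \<notin> N \<and> insert e (insert e' N) \<in> P
              then F (insert e (insert e' N)) e e' else 0)"
proof -
  have pick: "(\<Sum>M\<in>P. if e \<in> M \<and> e' \<in> M \<and> e' \<noteq> e then (if M - {e} - {e'} = N then F M e e' else 0) else 0)
      = (if e \<noteq> e' \<and> e \<notin> N \<and> e' \<notin> N \<and> insert e (insert e' N) \<in> P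
           then F (insert e (insert e' N)) e e' else 0)" for e e'
  proof -
    have "(e \<in> M \<and> e' \<in> M \<and> e' \<noteq> e \<and> M - {e} - {e'} = N)
        \<longleftrightarrow> (M = insert e (insert e' N) \<and> e \<noteq> e' \<and> e \<notin> N \<and> e' \<notin> N)" for M
      by blast
    then have "(\<Sum>M\<in>P. if e \<in> M \<and> e' \<in> M \<and> e' \<noteq> e then (if M - {e} - {e'} = N then F M e e' else 0) else 0)
      = (\<Sum>M\<in>P. if M = insert e (insert e' N) then
           (if e \<noteq> e' \<and> e \<notin> N \<and> e' \<notin> N then F (insert e (insert e' N)) e e' else 0) else 0)"
      by (intro sum.cong refl) (auto split: if_splits)
    then show ?thesis
      using assms(1) by (simp add: sum.delta')
  qed
  have "(\<Sum>M\<in>P. \<Sum>e\<in>M. \<Sum>e'\<in>M - {e}. if M - {e} - {e'} = N then F M e e' else 0)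
     = (\<Sum>M\<in>P. \<Sum>e\<in>V. \<Sum>e'\<in>V. if e \<in> M \<and> e' \<in> M \<and> e' \<noteq> e
          then (if M - {e} - {e'} = N then F M e e' else 0) else 0)"
    using assms(2,3) by (intro sum.cong refl sum_distinct_pairs_extend) auto
  also have "\<dots> = (\<Sum>e\<in>V. \<Sum>M\<in>P. \<Sum>e'\<in>V. if e \<in> M \<and> e' \<in> M \<and> e' \<noteq> e
          then (if M - {e} - {e'} = N then F M e e' else 0) else 0)"
    by (rule sum.swap)
  also have "\<dots> = (\<Sum>e\<in>V. \<Sum>e'\<in>V. \<Sum>M\<in>P. if e \<in> M \<and> e' \<in> M \<and> e' \<noteq> e
          then (if M - {e} - {e'} = N then F M e e' else 0) else 0)"
    by (intro sum.cong refl sum.swap)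
  finally show ?thesis
    by (simp only: pick)
qed

text \<open>The coefficient of the monomial \<open>x^N\<close> in the second partial derivative of
  \<^term>\<open>multilinear_poly a P\<close> by the variables \<open>g\<close> and \<open>h\<close>.\<close>

definition hessian_coeff :: "('v set \<Rightarrow> 'a) \<Rightarrow> 'v set set \<Rightarrow> 'v set \<Rightarrow> 'v \<Rightarrow> 'v \<Rightarrow> 'a::zero" where
  "hessian_coeff a P N g h = (if g \<noteq> h \<and> g \<notin> N \<and> h \<notin> N \<and> insert g (insert h N) \<in> P
      then a (insert g (insert h N)) else 0)"

lemma hessian_coeff_commute: "hessian_coeff a P N g h = hessian_coeff a P N h g"
  unfolding hessian_coeff_def by (auto simp: insert_commute)

lemma lookup_lin_subst_hessian_multilinear_poly:
  assumes V: "finite V" and P: "finite P" and PV: "\<forall>M\<in>P. M \<subseteq> V" and uV: "u \<in> V" and wV: "w \<in> V"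
    and AB: "\<forall>u\<in>V. \<forall>w\<in>V. (\<Sum>v\<in>V. A u v * B v w) = (if u = w then 1 else 0)"
    and N: "finite N"
  shows "Poly_Mapping.lookup (subst (lin_subst V B) (partial_deriv u (partial_deriv w
            (subst (lin_subst V A) (multilinear_poly a P))))) (sqfree_monomial N)
       = (\<Sum>e\<in>V. \<Sum>e'\<in>V. A e w * A e' u * hessian_coeff a P N e e')"
proof -
  have "Poly_Mapping.lookup (subst (lin_subst V B) (partial_deriv u (partial_deriv w
            (subst (lin_subst V A) (multilinear_poly a P))))) (sqfree_monomial N)
      = (\<Sum>M\<in>P. \<Sum>e\<in>M. \<Sum>e'\<in>M - {e}. if M - {e} - {e'} = N then a M * A e w * A e' u else 0)"
    unfolding subst_lin_subst_hessian_multilinear_poly[OF V PV uV wV AB] lookup_sum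
  proof (rule sum.cong[OF refl], rule sum.cong[OF refl], rule sum.cong[OF refl])
    fix M e e' assume "M \<in> P"
    then have "finite (M - {e} - {e'})"
      using PV V by (meson finite_Diff finite_subset)
    then show "Poly_Mapping.lookup (Poly_Mapping.single (sqfree_monomial (M - {e} - {e'}))
        (a M * A e w * A e' u)) (sqfree_monomial N) = (if M - {e} - {e'} = N then a M * A e w * A e' u else 0)"
      using N by (simp add: lookup_single sqfree_monomial_inject)
  qed
  also have "\<dots> = (\<Sum>e\<in>V. \<Sum>e'\<in>V. A e w * A e' u * hessian_coeff a P N e e')"
    unfolding sum_remove_pair_reindex[OF P V PV] hessian_coeff_def
    by (intro sum.cong refl) (simp add: mult_ac)
  finally show ?thesis .
qed

subsection \<open>Conjugated coordinate projections\<close>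

text \<open>The matrix \<open>A diag(1\<^sub>U) B\<close>; for \<open>B = A\<inverse>\<close> it is the conjugate of the coordinate
  projection onto the variables in \<open>U\<close>.\<close>

definition conj_proj :: "('v \<Rightarrow> 'v \<Rightarrow> 'a) \<Rightarrow> ('v \<Rightarrow> 'v \<Rightarrow> 'a) \<Rightarrow> 'v set \<Rightarrow> 'v \<Rightarrow> 'v \<Rightarrow> 'a::comm_ring_1" where
  "conj_proj A B U g e = (\<Sum>u\<in>U. A g u * B u e)"

definition is_scalar_on :: "'v set \<Rightarrow> ('v \<Rightarrow> 'v \<Rightarrow> 'a::zero) \<Rightarrow> bool" where
  "is_scalar_on V T \<longleftrightarrow> (\<forall>g\<in>V. \<forall>e\<in>V. g \<noteq> e \<longrightarrow> T g e = 0) \<and> (\<forall>e\<in>V. \<forall>h\<in>V. T e e = T h h)"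

lemma sum_bilinear_reorder:
  "(\<Sum>g\<in>V. \<Sum>h\<in>V. (\<Sum>u\<in>U. X g u * Y u) * (\<Sum>w\<in>W. Z h w * Q w) * (c g h :: 'a::comm_ring_1))
     = (\<Sum>u\<in>U. \<Sum>w\<in>W. Y u * Q w * (\<Sum>g\<in>V. \<Sum>h\<in>V. X g u * Z h w * c g h))"
proof -
  let ?F = "\<lambda>g h u w. Y u * Q w * (X g u * Z h w * c g h)"
  have "(\<Sum>g\<in>V. \<Sum>h\<in>V. (\<Sum>u\<in>U. X g u * Y u) * (\<Sum>w\<in>W. Z h w * Q w) * c g h)
      = (\<Sum>g\<in>V. \<Sum>h\<in>V. \<Sum>w\<in>W. \<Sum>u\<in>U. ?F g h u w)"
    by (simp add: sum_distrib_left sum_distrib_right mult_ac)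
  also have "\<dots> = (\<Sum>g\<in>V. \<Sum>h\<in>V. \<Sum>u\<in>U. \<Sum>w\<in>W. ?F g h u w)"
    by (intro sum.cong refl sum.swap)
  also have "\<dots> = (\<Sum>g\<in>V. \<Sum>u\<in>U. \<Sum>h\<in>V. \<Sum>w\<in>W. ?F g h u w)"
    by (intro sum.cong refl sum.swap)
  also have "\<dots> = (\<Sum>u\<in>U. \<Sum>g\<in>V. \<Sum>h\<in>V. \<Sum>w\<in>W. ?F g h u w)"
    by (rule sum.swap)
  also have "\<dots> = (\<Sum>u\<in>U. \<Sum>g\<in>V. \<Sum>w\<in>W. \<Sum>h\<in>V. ?F g h u w)"
    by (intro sum.cong refl sum.swap)
  also have "\<dots> = (\<Sum>u\<in>U. \<Sum>w\<in>W. \<Sum>g\<in>V. \<Sum>h\<in>V. ?F g h u w)"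
    by (intro sum.cong refl sum.swap)
  also have "\<dots> = (\<Sum>u\<in>U. \<Sum>w\<in>W. Y u * Q w * (\<Sum>g\<in>V. \<Sum>h\<in>V. X g u * Z h w * c g h))"
    by (simp add: sum_distrib_left)
  finally show ?thesis .
qed

lemma conj_proj_add_complement:
  assumes "finite V" "U \<subseteq> V" "g \<in> V" "e \<in> V"
    and AB: "\<forall>u\<in>V. \<forall>w\<in>V. (\<Sum>v\<in>V. A u v * B v w) = (if u = w then 1 else 0)"
  shows "conj_proj A B U g e + conj_proj A B (V - U) g e = (if g = e then 1 else 0)"
  using AB assms(3,4) sum.subset_diff[OF assms(2,1), of "\<lambda>v. A g v * B v e"]
  by (simp add: conj_proj_def add.commute)

lemma conj_proj_cross_terms_vanish:
  assumes c_commute: "\<And>g h. c g h = c h g"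
    and block: "\<forall>u\<in>U. \<forall>w\<in>V - U. (\<Sum>e\<in>V. \<Sum>e'\<in>V. A e w * A e' u * c e e') = 0"
  shows "(\<Sum>g\<in>V. \<Sum>h'\<in>V. conj_proj A B U g e * conj_proj A B (V - U) h' h * c g h') = 0"
proof -
  have "(\<Sum>g\<in>V. \<Sum>h'\<in>V. conj_proj A B U g e * conj_proj A B (V - U) h' h * c g h')
      = (\<Sum>u\<in>U. \<Sum>w\<in>V - U. B u e * B w h * (\<Sum>g\<in>V. \<Sum>h'\<in>V. A g u * A h' w * c g h'))"
    unfolding conj_proj_def by (rule sum_bilinear_reorder)
  also have "\<dots> = 0"
  proof (intro sum.neutral ballI)
    fix u w assume "u \<in> U" "w \<in> V - U"
    have "(\<Sum>g\<in>V. \<Sum>h'\<in>V. A g u * A h' w * c g h') = (\<Sum>h'\<in>V. \<Sum>g\<in>V. A h' w * A g u * c h' g)"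
      by (subst sum.swap) (simp add: c_commute mult_ac)
    also have "\<dots> = 0"
      using block \<open>u \<in> U\<close> \<open>w \<in> V - U\<close> by simp
    finally show "B u e * B w h * (\<Sum>g\<in>V. \<Sum>h'\<in>V. A g u * A h' w * c g h') = 0"
      by simp
  qed
  finally show ?thesis .
qed

text \<open>Write \<open>1 = T + R\<close> with \<open>T\<close>, \<open>R\<close> the conjugated projections onto \<open>U\<close> and its complement.
  The block hypothesis kills \<open>T\<^sup>t c R\<close>, so \<open>T\<^sup>t c = T\<^sup>t c T\<close>, which is symmetric.\<close>

lemma conj_proj_hessian_symmetric:
  assumes V: "finite V" and U: "U \<subseteq> V"
    and AB: "\<forall>u\<in>V. \<forall>w\<in>V. (\<Sum>v\<in>V. A u v * B v w) = (if u = w then 1 else 0)"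
    and c_commute: "\<And>g h. c g h = c h g"
    and block: "\<forall>u\<in>U. \<forall>w\<in>V - U. (\<Sum>e\<in>V. \<Sum>e'\<in>V. A e w * A e' u * c e e') = 0"
    and "e \<in> V" "h \<in> V"
  shows "(\<Sum>g\<in>V. conj_proj A B U g e * c g h) = (\<Sum>g\<in>V. conj_proj A B U g h * c g e)"
proof -
  let ?T = "conj_proj A B U" and ?R = "conj_proj A B (V - U)"
  define Z where "Z e h = (\<Sum>g\<in>V. \<Sum>h'\<in>V. ?T g e * ?T h' h * c g h')" for e h
  have cross: "(\<Sum>g\<in>V. \<Sum>h'\<in>V. ?T g e * ?R h' h * c g h') = 0" for e h
    using conj_proj_cross_terms_vanish[OF c_commute block] .
  have eq_Z: "(\<Sum>g\<in>V. ?T g e * c g h) = Z e h" if "h \<in> V" for e h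
  proof -
    have "(\<Sum>h'\<in>V. (?T h' h + ?R h' h) * c g h') = (\<Sum>h'\<in>V. if h' = h then c g h' else 0)" for g
      using conj_proj_add_complement[OF V U _ that AB] by (intro sum.cong) auto
    then have "c g h = (\<Sum>h'\<in>V. (?T h' h + ?R h' h) * c g h')" for g
      using V that by simp
    then have "(\<Sum>g\<in>V. ?T g e * c g h)
        = Z e h + (\<Sum>g\<in>V. \<Sum>h'\<in>V. ?T g e * ?R h' h * c g h')"
      by (simp add: Z_def sum_distrib_left algebra_simps sum.distrib)
    then show ?thesis
      using cross by simp
  qed
  have "Z e h = Z h e"
    unfolding Z_def by (subst sum.swap) (simp add: c_commute mult_ac)
  then show ?thesis
    using eq_Z assms(6,7) by simp
qed

lemma conj_proj_mult_right:
  assumes "finite V" "U \<subseteq> V"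
    and BA: "\<forall>u\<in>V. \<forall>w\<in>V. (\<Sum>v\<in>V. B u v * A v w) = (if u = w then 1 else 0)"
    and "x \<in> V"
  shows "(\<Sum>e\<in>V. conj_proj A B U g e * A e x) = (if x \<in> U then A g x else 0)"
proof -
  have "(\<Sum>e\<in>V. conj_proj A B U g e * A e x) = (\<Sum>u\<in>U. A g u * (\<Sum>e\<in>V. B u e * A e x))"
    unfolding conj_proj_def by (simp add: sum_distrib_left sum_distrib_right mult_ac) (rule sum.swap)
  also have "\<dots> = (\<Sum>u\<in>U. if u = x then A g u else 0)"
    using assms by (intro sum.cong) auto
  finally show ?thesis
    using finite_subset[OF assms(2,1)] by (simp add: sum.delta')
qed

lemma scalar_conj_proj_trivial:
  fixes A B :: "'v \<Rightarrow> 'v \<Rightarrow> 'a::idom"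
  assumes V: "finite V" and U: "U \<subseteq> V"
    and BA: "\<forall>u\<in>V. \<forall>w\<in>V. (\<Sum>v\<in>V. B u v * A v w) = (if u = w then 1 else 0)"
    and scalar: "is_scalar_on V (conj_proj A B U)"
  shows "U = {} \<or> U = V"
proof (rule ccontr)
  assume "\<not> (U = {} \<or> U = V)"
  then obtain u0 w0 where u0: "u0 \<in> U" and w0: "w0 \<in> V - U"
    using U by blast
  let ?T = "conj_proj A B U"
  define t where "t = ?T w0 w0"
  have off_diag: "?T g e = 0" if "g \<in> V" "e \<in> V" "g \<noteq> e" for g e
    using scalar that unfolding is_scalar_on_def by blast
  have diag: "?T g g = t" if "g \<in> V" for g
    using scalar that w0 unfolding is_scalar_on_def t_def by blast
  have AT: "t * A g x = (if x \<in> U then A g x else 0)" if g: "g \<in> V" and x: "x \<in> V" for g x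
  proof -
    have "(\<Sum>e\<in>V. ?T g e * A e x) = (\<Sum>e\<in>V. if e = g then ?T g g * A g x else 0)"
      using off_diag g by (intro sum.cong) auto
    also have "\<dots> = t * A g x"
      using V g diag by simp
    finally show ?thesis
      using conj_proj_mult_right[OF V U BA x] by simp
  qed
  have column_nonzero: "\<exists>g\<in>V. A g x \<noteq> 0" if "x \<in> V" for x
  proof (rule ccontr)
    assume "\<not> ?thesis"
    then have "(\<Sum>v\<in>V. B x v * A v x) = 0"
      by simp
    then show False
      using BA that by simp
  qed
  obtain g1 where "g1 \<in> V" "A g1 u0 \<noteq> 0"
    using column_nonzero u0 U by blast
  then have "t = 1"
    using AT[of g1 u0] u0 U by auto
  moreover obtain g2 where "g2 \<in> V" "A g2 w0 \<noteq> 0"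
    using column_nonzero w0 by blast
  then have "t = 0"
    using AT[of g2 w0] w0 by auto
  ultimately show False
    by simp
qed

definition commutes_with_hessian_coeffs ::
    "'v set \<Rightarrow> ('v set \<Rightarrow> 'a) \<Rightarrow> 'v set set \<Rightarrow> ('v \<Rightarrow> 'v \<Rightarrow> 'a::comm_ring_1) \<Rightarrow> bool" where
  "commutes_with_hessian_coeffs V a P T \<longleftrightarrow> (\<forall>N. finite N \<longrightarrow> (\<forall>e\<in>V. \<forall>h\<in>V.
     (\<Sum>g\<in>V. T g e * hessian_coeff a P N g h) = (\<Sum>g\<in>V. T g h * hessian_coeff a P N g e)))"

lemma commutes_with_hessian_coeffsD:
  assumes "commutes_with_hessian_coeffs V a P T" "finite N" "e \<in> V" "h \<in> V"
  shows "(\<Sum>g\<in>V. T g e * hessian_coeff a P N g h) = (\<Sum>g\<in>V. T g h * hessian_coeff a P N g e)"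
  using assms unfolding commutes_with_hessian_coeffs_def by blast

lemma block_hessian_imp_commutes_with_hessian_coeffs:
  fixes A B :: "'v \<Rightarrow> 'v \<Rightarrow> 'a::comm_ring_1"
  assumes V: "finite V" and P: "finite P" and PV: "\<forall>M\<in>P. M \<subseteq> V" and U: "U \<subseteq> V"
    and AB: "\<forall>u\<in>V. \<forall>w\<in>V. (\<Sum>v\<in>V. A u v * B v w) = (if u = w then 1 else 0)"
    and block: "\<forall>u\<in>U. \<forall>w\<in>V - U.
      partial_deriv u (partial_deriv w (subst (lin_subst V A) (multilinear_poly a P))) = 0"
  shows "commutes_with_hessian_coeffs V a P (conj_proj A B U)"
  unfolding commutes_with_hessian_coeffs_def
proof (intro allI impI ballI)
  fix N :: "'v set" and e h assume N: "finite N" and "e \<in> V" "h \<in> V"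
  have "\<forall>u\<in>U. \<forall>w\<in>V - U. (\<Sum>e\<in>V. \<Sum>e'\<in>V. A e w * A e' u * hessian_coeff a P N e e') = 0"
    using lookup_lin_subst_hessian_multilinear_poly[OF V P PV _ _ AB N, symmetric] block U
    by auto
  then show "(\<Sum>g\<in>V. conj_proj A B U g e * hessian_coeff a P N g h)
      = (\<Sum>g\<in>V. conj_proj A B U g h * hessian_coeff a P N g e)"
    by (rule conj_proj_hessian_symmetric[OF V U AB hessian_coeff_commute _ \<open>e \<in> V\<close> \<open>h \<in> V\<close>])
qed

lemma direct_sum_multilinear_poly_imp_commuting_projection:
  fixes a :: "'v set \<Rightarrow> 'k::field"
  assumes "direct_sum V (multilinear_poly a P)" and V: "finite V" and P: "finite P"
    and PV: "\<forall>M\<in>P. M \<subseteq> V" and "{} \<notin> P" "M \<in> P" "a M \<noteq> 0"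
  obtains A B U where
    "\<forall>u\<in>V. \<forall>w\<in>V. (\<Sum>v\<in>V. B u v * A v w) = (if u = w then 1 else 0)"
    "U \<subseteq> V" "U \<noteq> {}" "U \<noteq> V" "commutes_with_hessian_coeffs V a P (conj_proj A B U)"
proof -
  have fin: "\<forall>M\<in>P. finite M"
    using PV V by (meson finite_subset)
  have "vars (multilinear_poly a P) \<subseteq> V"
    using vars_multilinear_poly[OF fin] PV by blast
  moreover have "multilinear_poly a P \<noteq> 0"
    using multilinear_poly_nonzero[OF P fin] assms(6,7) by blast
  moreover have "Poly_Mapping.lookup (multilinear_poly a P) 0 = 0"
    using lookup_multilinear_poly_0[OF P fin \<open>{} \<notin> P\<close>] .
  ultimately obtain A B U where AB: "\<forall>u\<in>V. \<forall>w\<in>V. (\<Sum>v\<in>V. A u v * B v w) = (if u = w then 1 else 0)"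
    and BA: "\<forall>u\<in>V. \<forall>w\<in>V. (\<Sum>v\<in>V. B u v * A v w) = (if u = w then 1 else 0)"
    and U: "U \<subseteq> V" "U \<noteq> {}" "U \<noteq> V"
    and block: "\<forall>u\<in>U. \<forall>w\<in>V - U.
      partial_deriv u (partial_deriv w (subst (lin_subst V A) (multilinear_poly a P))) = 0"
    by (rule direct_sum_imp_block_hessian[OF assms(1) V])
  then show ?thesis
    using that block_hessian_imp_commutes_with_hessian_coeffs[OF V P PV U(1) AB block] by blast
qed

subsection \<open>Perfect matchings\<close>

definition covers :: "nat \<times> nat \<Rightarrow> nat \<Rightarrow> bool" where
  "covers e k \<longleftrightarrow> fst e = k \<or> snd e = k"

lemma pvars_iff: "e \<in> pvars n \<longleftrightarrow> 1 \<le> fst e \<and> fst e < snd e \<and> snd e \<le> 2 * n"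
  by (cases e) (simp add: pvars_def)

lemma finite_pvars: "finite (pvars n)"
  by (rule finite_subset[of _ "{0..2*n} \<times> {0..2*n}"]) (auto simp: pvars_def)

lemma perfect_matching_subset: "M \<in> perfect_matchings n \<Longrightarrow> M \<subseteq> pvars n"
  by (simp add: perfect_matchings_def)

lemma finite_perfect_matching: "M \<in> perfect_matchings n \<Longrightarrow> finite M"
  using finite_pvars perfect_matching_subset by (rule finite_subset[rotated])

lemma finite_perfect_matchings: "finite (perfect_matchings n)"
  by (rule finite_subset[of _ "Pow (pvars n)"]) (auto simp: finite_pvars dest: perfect_matching_subset)

lemma perfect_matching_ex1_covers:
  "M \<in> perfect_matchings n \<Longrightarrow> 1 \<le> k \<Longrightarrow> k \<le> 2 * n \<Longrightarrow> \<exists>!e. e \<in> M \<and> covers e k"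
  by (simp add: perfect_matchings_def covers_def)

lemma perfect_matching_covers:
  "M \<in> perfect_matchings n \<Longrightarrow> 1 \<le> k \<Longrightarrow> k \<le> 2 * n \<Longrightarrow> \<exists>e\<in>M. covers e k"
  using perfect_matching_ex1_covers by blast

lemma perfect_matching_covers_unique:
  "M \<in> perfect_matchings n \<Longrightarrow> e \<in> M \<Longrightarrow> e' \<in> M \<Longrightarrow> covers e k \<Longrightarrow> covers e' k
   \<Longrightarrow> 1 \<le> k \<Longrightarrow> k \<le> 2 * n \<Longrightarrow> e = e'"
  using perfect_matching_ex1_covers by blast

lemma edge_eqI: "fst g < snd g \<Longrightarrow> fst g' < snd g' \<Longrightarrow> covers g' (fst g) \<Longrightarrow> covers g' (snd g) \<Longrightarrow> g = g'"
  unfolding covers_def by (cases g, cases g') auto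

definition perfect_matching_on :: "nat set \<Rightarrow> (nat \<times> nat) set \<Rightarrow> bool" where
  "perfect_matching_on W N \<longleftrightarrow>
     (\<forall>e\<in>N. fst e < snd e \<and> fst e \<in> W \<and> snd e \<in> W) \<and> (\<forall>k\<in>W. \<exists>!e\<in>N. covers e k)"

lemma perfect_matchings_iff: "M \<in> perfect_matchings n \<longleftrightarrow> perfect_matching_on {1..2*n} M"
  by (auto simp: perfect_matchings_def perfect_matching_on_def pvars_iff covers_def)

lemma perfect_matching_on_insert:
  assumes N: "perfect_matching_on W N" and e: "fst e < snd e" "fst e \<notin> W" "snd e \<notin> W"
  shows "perfect_matching_on (insert (fst e) (insert (snd e) W)) (insert e N)"
  unfolding perfect_matching_on_def
proof
  show "\<forall>e'\<in>insert e N. fst e' < snd e' \<and> fst e' \<in> insert (fst e) (insert (snd e) W)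
      \<and> snd e' \<in> insert (fst e) (insert (snd e) W)"
    using N e(1) by (auto simp: perfect_matching_on_def)
next
  show "\<forall>k\<in>insert (fst e) (insert (snd e) W). \<exists>!e'\<in>insert e N. covers e' k"
  proof
    fix k assume k: "k \<in> insert (fst e) (insert (snd e) W)"
    show "\<exists>!e'\<in>insert e N. covers e' k"
    proof (cases "k \<in> W")
      case True
      then have "\<not> covers e k"
        using e by (auto simp: covers_def)
      then show ?thesis
        using N True by (auto simp: perfect_matching_on_def)
    next
      case False
      then have "\<not> covers e' k" if "e' \<in> N" for e'
        using N that by (auto simp: perfect_matching_on_def covers_def)
      moreover have "covers e k"
        using k False by (auto simp: covers_def)
      ultimately show ?thesis
        by blast
    qed
  qed
qed

lemma perfect_matching_on_exists:
  assumes "finite W" "even (card W)"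
  shows "\<exists>N. perfect_matching_on W N"
  using assms
proof (induction "card W" arbitrary: W rule: less_induct)
  case less
  show ?case
  proof (cases "W = {}")
    case True
    then show ?thesis
      by (auto simp: perfect_matching_on_def)
  next
    case False
    then obtain i where i: "i \<in> W"
      by blast
    have "card W \<noteq> 1" "card W \<noteq> 0"
      using less.prems False by auto
    then have two: "card W \<ge> 2"
      by linarith
    then have "card (W - {i}) \<noteq> 0"
      using i less.prems(1) by simp
    then obtain j where j: "j \<in> W" "j \<noteq> i"
      by (metis card.empty ex_in_conv Diff_iff singletonI)
    let ?e = "(min i j, max i j)" and ?W' = "W - {i, j}"
    have "card ?W' = card W - 2"
      using i j less.prems(1) by (simp add: card_Diff_subset)
    then have "card ?W' < card W" "even (card ?W')"
      using two less.prems(2) by auto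
    then obtain N where "perfect_matching_on ?W' N"
      using less.hyps[of ?W'] less.prems(1) by blast
    then have "perfect_matching_on (insert (fst ?e) (insert (snd ?e) ?W')) (insert ?e N)"
      using j by (intro perfect_matching_on_insert) auto
    moreover have "insert (fst ?e) (insert (snd ?e) ?W') = W"
      using i j by (auto simp: min_def max_def)
    ultimately show ?thesis
      by auto
  qed
qed

lemma perfect_matchings_nonempty: "perfect_matchings n \<noteq> {}"
  using perfect_matching_on_exists[of "{1..2*n}"] by (auto simp: perfect_matchings_iff)

lemma empty_notin_perfect_matchings: "n \<ge> 1 \<Longrightarrow> {} \<notin> perfect_matchings n"
  using perfect_matching_covers[of "{}" n 1] by auto

lemma perfect_matching_through_two_edges:
  assumes "g \<in> pvars n" "h \<in> pvars n" "{fst g, snd g} \<inter> {fst h, snd h} = {}"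
  shows "\<exists>N. g \<notin> N \<and> h \<notin> N \<and> insert g (insert h N) \<in> perfect_matchings n"
proof -
  let ?E = "{fst g, snd g, fst h, snd h}"
  define W where "W = {1..2*n} - ?E"
  have "?E \<subseteq> {1..2*n}" "card ?E = 4"
    using assms by (auto simp: pvars_iff)
  then have "card W = 2 * n - 4"
    unfolding W_def by (simp add: card_Diff_subset)
  then obtain N where N: "perfect_matching_on W N"
    using perfect_matching_on_exists[of W] unfolding W_def by auto
  then have "perfect_matching_on (insert (fst g) (insert (snd g) (insert (fst h) (insert (snd h) W))))
      (insert g (insert h N))"
    using assms by (intro perfect_matching_on_insert) (auto simp: W_def pvars_iff)
  moreover have "insert (fst g) (insert (snd g) (insert (fst h) (insert (snd h) W))) = {1..2*n}"
    using \<open>?E \<subseteq> {1..2*n}\<close> by (auto simp: W_def)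
  moreover have "g \<notin> N" "h \<notin> N"
    using N by (auto simp: perfect_matching_on_def W_def)
  ultimately show ?thesis
    by (auto simp: perfect_matchings_iff)
qed

lemma exists_edge_avoiding:
  assumes "finite X" "card X + 2 \<le> 2 * n"
  shows "\<exists>h\<in>pvars n. fst h \<notin> X \<and> snd h \<notin> X"
proof -
  have "card {1..2*n} - card X \<le> card ({1..2*n} - X)"
    by (rule diff_card_le_card_Diff) fact
  then have "2 \<le> card ({1..2*n} - X)"
    using assms(2) by simp
  then obtain S where "S \<subseteq> {1..2*n} - X" "card S = 2"
    by (rule obtain_subset_with_card_n)
  then obtain i j where "i \<in> {1..2*n} - X" "j \<in> {1..2*n} - X" "i \<noteq> j"
    by (auto simp: card_2_iff)
  then show ?thesis
    by (intro bexI[of _ "(min i j, max i j)"]) (auto simp: pvars_iff min_def max_def)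
qed

lemma perfect_matching_completion_unique:
  assumes M: "insert g (insert h N) \<in> perfect_matchings n" and "g \<notin> N" "g \<noteq> h"
    and M': "insert g' (insert h N) \<in> perfect_matchings n"
  shows "g = g'"
proof -
  have g: "1 \<le> fst g" "fst g < snd g" "snd g \<le> 2 * n"
    using perfect_matching_subset[OF M] by (auto simp: pvars_iff)
  have "covers g' k" if k: "covers g k" "1 \<le> k" "k \<le> 2 * n" for k
  proof -
    obtain e where e: "e \<in> insert g' (insert h N)" "covers e k"
      using perfect_matching_covers[OF M' k(2,3)] by blast
    show ?thesis
    proof (cases "e = g'")
      case False
      then have "e = g"
        using e perfect_matching_covers_unique[OF M _ _ e(2) k] by auto
      then show ?thesis
        using False e(1) assms(2,3) by auto
    qed (use e in auto)
  qed
  then have "covers g' (fst g)" "covers g' (snd g)"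
    using g by (auto simp: covers_def)
  then show ?thesis
    using edge_eqI g(2) perfect_matching_subset[OF M'] by (auto simp: pvars_iff)
qed

lemma perfect_matching_exchange_covers:
  assumes M: "insert g (insert h N) \<in> perfect_matchings n"
    and M': "insert g' (insert e N) \<in> perfect_matchings n" and "e \<notin> N"
    and k: "covers e k"
  shows "covers g k \<or> covers h k"
proof -
  have "1 \<le> k" "k \<le> 2 * n"
    using perfect_matching_subset[OF M'] k by (auto simp: pvars_iff covers_def)
  moreover obtain e0 where e0: "e0 \<in> insert g (insert h N)" "covers e0 k"
    using perfect_matching_covers[OF M calculation] by blast
  ultimately have "e0 \<notin> N"
    using perfect_matching_covers_unique[OF M', of e0 e k] k \<open>e \<notin> N\<close> by auto
  then show ?thesis
    using e0 by auto
qed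

lemma sum_hessian_coeff_perfect_matchings:
  fixes T :: "nat \<times> nat \<Rightarrow> nat \<times> nat \<Rightarrow> 'a::comm_ring_1"
  assumes M: "insert g0 (insert h N) \<in> perfect_matchings n" and "g0 \<notin> N" "h \<notin> N" "g0 \<noteq> h"
  shows "(\<Sum>g\<in>pvars n. T g e * hessian_coeff a (perfect_matchings n) N g h)
       = T g0 e * a (insert g0 (insert h N))"
proof -
  have "hessian_coeff a (perfect_matchings n) N g h = 0" if "g \<noteq> g0" for g
    using perfect_matching_completion_unique[OF M assms(2,4), of g] that by (auto simp: hessian_coeff_def)
  moreover have "g0 \<in> pvars n"
    using perfect_matching_subset[OF M] by auto
  ultimately have "(\<Sum>g\<in>pvars n. T g e * hessian_coeff a (perfect_matchings n) N g h)
      = (\<Sum>g\<in>{g0}. T g e * hessian_coeff a (perfect_matchings n) N g h)"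
    by (intro sum.mono_neutral_right finite_pvars) auto
  then show ?thesis
    using assms by (simp add: hessian_coeff_def)
qed

text \<open>Pick a vertex \<open>x\<close> of \<open>e\<^sub>0\<close> not on \<open>g\<^sub>0\<close> and an edge \<open>h\<close> avoiding \<open>x\<close> and \<open>g\<^sub>0\<close>, and
  complete \<open>{g\<^sub>0, h}\<close> to a perfect matching \<open>N \<union> {g\<^sub>0, h}\<close>. In the commutation relation
  for \<open>N, e\<^sub>0, h\<close> the only nonzero term on the left is the one for \<open>g\<^sub>0\<close>, and every term
  on the right vanishes.\<close>

lemma commutes_with_hessian_coeffs_off_diag:
  fixes T :: "nat \<times> nat \<Rightarrow> nat \<times> nat \<Rightarrow> 'a::idom"
  assumes "n \<ge> 3" and a: "\<forall>M\<in>perfect_matchings n. a M \<noteq> 0"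
    and T: "commutes_with_hessian_coeffs (pvars n) a (perfect_matchings n) T"
    and g0: "g0 \<in> pvars n" and e0: "e0 \<in> pvars n" and "g0 \<noteq> e0"
  shows "T g0 e0 = 0"
proof -
  obtain x where x: "covers e0 x" "\<not> covers g0 x"
    using edge_eqI[of e0 g0] g0 e0 \<open>g0 \<noteq> e0\<close> by (auto simp: pvars_iff covers_def)
  have "card {fst g0, snd g0, x} \<le> 3"
    by (simp add: card_insert_if)
  then have "card {fst g0, snd g0, x} + 2 \<le> 2 * n"
    using \<open>n \<ge> 3\<close> by linarith
  then obtain h where h: "h \<in> pvars n" "fst h \<notin> {fst g0, snd g0, x}" "snd h \<notin> {fst g0, snd g0, x}"
    using exists_edge_avoiding[of "{fst g0, snd g0, x}" n] by blast
  then obtain N where N: "g0 \<notin> N" "h \<notin> N" and M: "insert g0 (insert h N) \<in> perfect_matchings n"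
    using perfect_matching_through_two_edges[OF g0 h(1)] by auto
  have "g0 \<noteq> h" "\<not> covers h x"
    using h by (auto simp: covers_def)
  have vanish: "hessian_coeff a (perfect_matchings n) N g e0 = 0" for g
  proof (rule ccontr)
    assume "hessian_coeff a (perfect_matchings n) N g e0 \<noteq> 0"
    then have "insert g (insert e0 N) \<in> perfect_matchings n" "e0 \<notin> N"
      by (auto simp: hessian_coeff_def split: if_splits)
    with perfect_matching_exchange_covers[OF M _ _ x(1)] x(2) \<open>\<not> covers h x\<close> show False
      by blast
  qed
  have "T g0 e0 * a (insert g0 (insert h N))
      = (\<Sum>g\<in>pvars n. T g e0 * hessian_coeff a (perfect_matchings n) N g h)"
    by (rule sum_hessian_coeff_perfect_matchings[OF M N \<open>g0 \<noteq> h\<close>, symmetric])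
  also have "\<dots> = (\<Sum>g\<in>pvars n. T g h * hessian_coeff a (perfect_matchings n) N g e0)"
    using finite_perfect_matching[OF M] by (intro commutes_with_hessian_coeffsD[OF T _ e0 h(1)]) simp
  also have "\<dots> = 0"
    by (simp add: vanish)
  finally have "T g0 e0 * a (insert g0 (insert h N)) = 0" .
  then show ?thesis
    using a M by simp
qed

lemma commutes_with_hessian_coeffs_diag_eq:
  fixes T :: "nat \<times> nat \<Rightarrow> nat \<times> nat \<Rightarrow> 'a::idom"
  assumes a: "\<forall>M\<in>perfect_matchings n. a M \<noteq> 0"
    and T: "commutes_with_hessian_coeffs (pvars n) a (perfect_matchings n) T"
    and e: "e \<in> pvars n" and h: "h \<in> pvars n" and disjoint: "{fst e, snd e} \<inter> {fst h, snd h} = {}"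
  shows "T e e = T h h"
proof -
  obtain N where N: "e \<notin> N" "h \<notin> N" and M: "insert e (insert h N) \<in> perfect_matchings n"
    using perfect_matching_through_two_edges[OF e h disjoint] by blast
  have M': "insert h (insert e N) \<in> perfect_matchings n"
    using M by (simp add: insert_commute)
  have "e \<noteq> h"
    using disjoint by auto
  have "T e e * a (insert e (insert h N))
      = (\<Sum>g\<in>pvars n. T g e * hessian_coeff a (perfect_matchings n) N g h)"
    by (rule sum_hessian_coeff_perfect_matchings[OF M N \<open>e \<noteq> h\<close>, symmetric])
  also have "\<dots> = (\<Sum>g\<in>pvars n. T g h * hessian_coeff a (perfect_matchings n) N g e)"
    using finite_perfect_matching[OF M] by (intro commutes_with_hessian_coeffsD[OF T _ e h]) simp
  also have "\<dots> = T h h * a (insert e (insert h N))"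
    using sum_hessian_coeff_perfect_matchings[OF M' N(2,1) \<open>e \<noteq> h\<close>[symmetric]]
    by (simp add: insert_commute)
  finally show ?thesis
    using a M by simp
qed

lemma commutes_with_hessian_coeffs_imp_scalar:
  fixes T :: "nat \<times> nat \<Rightarrow> nat \<times> nat \<Rightarrow> 'a::idom"
  assumes "n \<ge> 3" and a: "\<forall>M\<in>perfect_matchings n. a M \<noteq> 0"
    and T: "commutes_with_hessian_coeffs (pvars n) a (perfect_matchings n) T"
  shows "is_scalar_on (pvars n) T"
  unfolding is_scalar_on_def
proof (intro conjI ballI impI)
  show "T g e = 0" if "g \<in> pvars n" "e \<in> pvars n" "g \<noteq> e" for g e
    using commutes_with_hessian_coeffs_off_diag[OF assms that] .
  show "T e e = T h h" if e: "e \<in> pvars n" and h: "h \<in> pvars n" for e h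
  proof -
    have "card {fst e, snd e, fst h, snd h} \<le> 4"
      by (simp add: card_insert_if)
    then have "card {fst e, snd e, fst h, snd h} + 2 \<le> 2 * n"
      using \<open>n \<ge> 3\<close> by linarith
    then obtain h' where h': "h' \<in> pvars n"
        "fst h' \<notin> {fst e, snd e, fst h, snd h}" "snd h' \<notin> {fst e, snd e, fst h, snd h}"
      using exists_edge_avoiding[of "{fst e, snd e, fst h, snd h}" n] by blast
    have "T e e = T h' h'"
      using commutes_with_hessian_coeffs_diag_eq[OF a T e h'(1)] h' by auto
    also have "\<dots> = T h h"
      using commutes_with_hessian_coeffs_diag_eq[OF a T h'(1) h] h' by auto
    finally show ?thesis .
  qed
qed

theorem corollary5p8:
  fixes n :: nat and a :: "(nat \<times> nat) set \<Rightarrow> 'k::field"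
  assumes "n \<ge> 3"
    and "card (UNIV :: 'k set) \<noteq> 2"
    and "\<forall>M\<in>perfect_matchings n. a M \<noteq> 0"
  shows "\<not> direct_sum (pvars n)
           (\<Sum>M\<in>perfect_matchings n. mconst_mono (a M) 0 * matching_monomial M)"
proof
  let ?V = "pvars n" and ?P = "perfect_matchings n"
  assume "direct_sum ?V (\<Sum>M\<in>?P. mconst_mono (a M) 0 * matching_monomial M)"
  then have "direct_sum ?V (multilinear_poly a ?P)"
    by (simp add: multilinear_poly_def matching_monomial_def)
  moreover have "\<forall>M\<in>?P. M \<subseteq> ?V"
    using perfect_matching_subset by blast
  moreover have "{} \<notin> ?P"
    using \<open>n \<ge> 3\<close> by (intro empty_notin_perfect_matchings) simp
  moreover obtain M where "M \<in> ?P"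
    using perfect_matchings_nonempty by blast
  moreover have "a M \<noteq> 0"
    using assms(3) \<open>M \<in> ?P\<close> by blast
  ultimately obtain A B U
    where BA: "\<forall>u\<in>?V. \<forall>w\<in>?V. (\<Sum>v\<in>?V. B u v * A v w) = (if u = w then 1 else 0)"
      and U: "U \<subseteq> ?V" "U \<noteq> {}" "U \<noteq> ?V"
      and "commutes_with_hessian_coeffs ?V a ?P (conj_proj A B U)"
    by (rule direct_sum_multilinear_poly_imp_commuting_projection[OF _ finite_pvars finite_perfect_matchings])
  then have "is_scalar_on ?V (conj_proj A B U)"
    using commutes_with_hessian_coeffs_imp_scalar[OF \<open>n \<ge> 3\<close> assms(3)] by blast
  then show False
    using scalar_conj_proj_trivial[OF finite_pvars U(1) BA] U(2,3) by blast
qed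

end
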